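(* Let $A,N\in\mathbb{R}^{m\times n}$ and let $\hat A=A+N$. Then for every positive integer $k$, $$\|A-\hat A_k\|_2\le\|A-A_k\|_2+2\|N_k\|_2,$$ $$\|A-\hat A_k\|_F\le\|A-A_k\|_F+\|N_k\|_F+2\sqrt{\|N_k\|_F\,\|A_k\|_F}.$$
   Context: For a matrix $M$, $M_k$ denotes its best rank-$k$ approximation (the truncated SVD keeping the top $k$ singular triplets). $\|\cdot\|_2$ is the spectral norm and $\|\cdot\|_F$ the Frobenius norm. *)

theory Defs
  imports "HOL-Analysis.Analysis"
begin

text \<open>Real m x n matrices are modelled as real^'n^'m (m rows, n columns).\<close>

definition outer_prod :: "real^'m \<Rightarrow> real^'n \<Rightarrow> real^'n^'m" where
  "outer_prod u v = (\<chi> i j. u $ i * v $ j)"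

definition spec_norm :: "real^'n^'m \<Rightarrow> real" where
  "spec_norm M = onorm (\<lambda>x. M *v x)"

definition frob_norm :: "real^'n^'m \<Rightarrow> real" where
  "frob_norm M = sqrt (\<Sum>i\<in>UNIV. \<Sum>j\<in>UNIV. (M $ i $ j)^2)"

definition svd_expansion ::
  "real^'n^'m \<Rightarrow> nat \<Rightarrow> (nat \<Rightarrow> real) \<Rightarrow> (nat \<Rightarrow> real^'m) \<Rightarrow> (nat \<Rightarrow> real^'n) \<Rightarrow> bool" where
  "svd_expansion M r \<sigma> u v \<longleftrightarrow>
     (\<forall>i<r. 0 < \<sigma> i) \<and>
     (\<forall>i j. i \<le> j \<and> j < r \<longrightarrow> \<sigma> j \<le> \<sigma> i) \<and>
     (\<forall>i<r. \<forall>j<r. u i \<bullet> u j = (if i = j then 1 else 0)) \<and>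
     (\<forall>i<r. \<forall>j<r. v i \<bullet> v j = (if i = j then 1 else 0)) \<and>
     M = (\<Sum>i<r. \<sigma> i *\<^sub>R outer_prod (u i) (v i))"

definition best_rank_approx :: "nat \<Rightarrow> real^'n^'m \<Rightarrow> real^'n^'m \<Rightarrow> bool" where
  "best_rank_approx k M B \<longleftrightarrow>
     (\<exists>r \<sigma> u v. svd_expansion M r \<sigma> u v \<and>
        B = (\<Sum>i<min k r. \<sigma> i *\<^sub>R outer_prod (u i) (v i)))"

end

theory Submission imports Defs begin

text \<open>
  Let \<open>P\<close> and \<open>Q\<close> be the orthogonal projections onto the top \<open>k\<close> left singular vectors of
  \<open>A + N\<close> and of \<open>A\<close>, acting on matrices from the left, so that \<open>\<hat>A\<^sub>k = P (A + N)\<close> and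
  \<open>A\<^sub>k = Q A\<close>. By the Ky Fan maximum principle a rank-\<open>k\<close> projection captures at most the
  energy of the top \<open>k\<close> singular values, so \<open>\<parallel>P N\<parallel>\<^sub>F, \<parallel>Q N\<parallel>\<^sub>F \<le> \<parallel>N\<^sub>k\<parallel>\<^sub>F\<close> and
  \<open>\<parallel>Q (A + N)\<parallel>\<^sub>F \<le> \<parallel>P (A + N)\<parallel>\<^sub>F\<close>; hence \<open>\<parallel>P A\<parallel>\<^sub>F \<ge> \<parallel>A\<^sub>k\<parallel>\<^sub>F - 2\<parallel>N\<^sub>k\<parallel>\<^sub>F\<close>. Both projections split
  \<open>\<parallel>A\<parallel>\<^sub>F\<^sup>2\<close> by Pythagoras, so \<open>\<parallel>A - P A\<parallel>\<^sub>F\<close> exceeds \<open>\<parallel>A - A\<^sub>k\<parallel>\<^sub>F\<close> by at most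
  \<open>2 \<surd>(\<parallel>N\<^sub>k\<parallel>\<^sub>F \<parallel>A\<^sub>k\<parallel>\<^sub>F)\<close>, and \<open>A - \<hat>A\<^sub>k = (A - P A) - P N\<close>.

  For the spectral norm, \<open>\<hat>A\<^sub>k\<close> is a best rank-\<open>k\<close> approximation of \<open>A + N\<close> in the sense of
  Eckart and Young, so \<open>\<parallel>A + N - \<hat>A\<^sub>k\<parallel>\<^sub>2 \<le> \<parallel>A + N - A\<^sub>k\<parallel>\<^sub>2 \<le> \<parallel>A - A\<^sub>k\<parallel>\<^sub>2 + \<parallel>N\<parallel>\<^sub>2\<close>, and
  \<open>\<parallel>N\<parallel>\<^sub>2 = \<parallel>N\<^sub>k\<parallel>\<^sub>2\<close> for \<open>k > 0\<close>.
\<close>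

lemma inner_outer_prod:
  "outer_prod (a::real^'m) (b::real^'n) \<bullet> outer_prod c d = (a \<bullet> c) * (b \<bullet> d)"
  unfolding outer_prod_def inner_vec_def by (simp add: sum_product mult_ac)

lemma inner_outer_prod_left: "outer_prod (a::real^'m) (b::real^'n) \<bullet> M = b \<bullet> (a v* M)"
proof -
  have "outer_prod a b \<bullet> M = (\<Sum>i\<in>UNIV. \<Sum>j\<in>UNIV. a$i * b$j * M$i$j)"
    unfolding outer_prod_def inner_vec_def by simp
  also have "\<dots> = (\<Sum>j\<in>UNIV. \<Sum>i\<in>UNIV. b$j * (a$i * M$i$j))"
    by (subst sum.swap) (simp add: mult_ac)
  also have "\<dots> = b \<bullet> (a v* M)"
    unfolding inner_vec_def vector_matrix_mult_def by (simp add: sum_distrib_left)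
  finally show ?thesis .
qed

lemma outer_prod_add_right:
  "outer_prod (u::real^'m) (a + b :: real^'n) = outer_prod u a + outer_prod u b"
  unfolding outer_prod_def by (simp add: vec_eq_iff distrib_left)

lemma outer_prod_scaleR_right:
  "outer_prod (u::real^'m) (c *\<^sub>R a :: real^'n) = c *\<^sub>R outer_prod u a"
  unfolding outer_prod_def by (simp add: vec_eq_iff mult_ac)

lemma outer_prod_mult_vector:
  "(c *\<^sub>R outer_prod (u::real^'m) (v::real^'n)) *v x = (c * (v \<bullet> x)) *\<^sub>R u"
  unfolding outer_prod_def matrix_vector_mult_def inner_vec_def
  by (simp add: vec_eq_iff sum_distrib_left mult_ac)

lemma vector_mult_outer_prod:
  "(w::real^'m) v* (c *\<^sub>R outer_prod (u::real^'m) (v::real^'n)) = (c * (w \<bullet> u)) *\<^sub>R v"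
  unfolding outer_prod_def vector_matrix_mult_def inner_vec_def
  by (simp add: vec_eq_iff sum_distrib_left sum_distrib_right mult_ac)

lemma outer_prod_sum_mult_vector:
  "(\<Sum>i\<in>I. c i *\<^sub>R outer_prod (u i :: real^'m) (v i :: real^'n)) *v x
     = (\<Sum>i\<in>I. (c i * (v i \<bullet> x)) *\<^sub>R u i)"
proof (cases "finite I")
  case True then show ?thesis
    by (induction I rule: finite_induct)
      (simp_all add: matrix_vector_mult_add_rdistrib outer_prod_mult_vector)
qed simp

lemma vector_mult_outer_prod_sum:
  "(w::real^'m) v* (\<Sum>i\<in>I. c i *\<^sub>R outer_prod (u i :: real^'m) (v i :: real^'n))
     = (\<Sum>i\<in>I. (c i * (w \<bullet> u i)) *\<^sub>R v i)"
proof (cases "finite I")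
  case True then show ?thesis
    by (induction I rule: finite_induct)
      (simp_all add: vector_matrix_mult_add_rdistrib vector_mult_outer_prod)
qed simp

lemma frob_norm_eq_norm: "frob_norm (M::real^'n^'m) = norm M"
  unfolding frob_norm_def norm_eq_sqrt_inner inner_vec_def by (simp add: power2_eq_square)

definition orthonormal_upto :: "(nat \<Rightarrow> 'a::real_inner) \<Rightarrow> nat \<Rightarrow> bool" where
  "orthonormal_upto e r \<longleftrightarrow> (\<forall>i<r. \<forall>j<r. e i \<bullet> e j = (if i = j then 1 else 0))"

lemma orthonormal_upto_mono: "orthonormal_upto e r \<Longrightarrow> p \<le> r \<Longrightarrow> orthonormal_upto e p"
  unfolding orthonormal_upto_def by auto

lemma orthonormal_upto_norm: "orthonormal_upto e r \<Longrightarrow> i < r \<Longrightarrow> norm (e i) = 1"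
  unfolding orthonormal_upto_def by (simp add: norm_eq_sqrt_inner)

lemma inner_sum_orthonormal:
  assumes "orthonormal_upto e r" "I \<subseteq> {..<r}"
  shows "(\<Sum>i\<in>I. c i *\<^sub>R e i) \<bullet> (\<Sum>j\<in>I. d j *\<^sub>R e j) = (\<Sum>i\<in>I. c i * d i)"
proof -
  have "(\<Sum>i\<in>I. c i *\<^sub>R e i) \<bullet> (\<Sum>j\<in>I. d j *\<^sub>R e j)
      = (\<Sum>i\<in>I. \<Sum>j\<in>I. c i * d j * (e i \<bullet> e j))"
    by (simp add: inner_sum_left inner_sum_right sum_distrib_left mult_ac) (rule sum.swap)
  also have "\<dots> = (\<Sum>i\<in>I. \<Sum>j\<in>I. if i = j then c i * d j else 0)"
    using assms unfolding orthonormal_upto_def by (intro sum.cong refl) (auto simp: subset_iff)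
  also have "\<dots> = (\<Sum>i\<in>I. c i * d i)"
    using assms(2) finite_subset by fastforce
  finally show ?thesis .
qed

lemma norm_sum_orthonormal:
  assumes "orthonormal_upto e r" "I \<subseteq> {..<r}"
  shows "(norm (\<Sum>i\<in>I. c i *\<^sub>R e i))\<^sup>2 = (\<Sum>i\<in>I. (c i)\<^sup>2)"
  using inner_sum_orthonormal[OF assms, of c c]
  by (simp add: power2_norm_eq_inner[symmetric] power2_eq_square)

lemma inner_orthonormal_sum:
  assumes "orthonormal_upto e r" "I \<subseteq> {..<r}" "j \<in> I"
  shows "e j \<bullet> (\<Sum>i\<in>I. c i *\<^sub>R e i) = c j"
proof -
  have "e j \<bullet> (\<Sum>i\<in>I. c i *\<^sub>R e i) = (\<Sum>i\<in>I. if j = i then c i else 0)"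
    unfolding inner_sum_right using assms unfolding orthonormal_upto_def
    by (intro sum.cong refl) (auto simp: subset_iff)
  then show ?thesis using assms(2,3) finite_subset by fastforce
qed

lemma bessel_inequality:
  assumes "orthonormal_upto e r" "I \<subseteq> {..<r}"
  shows "(\<Sum>i\<in>I. (e i \<bullet> x)\<^sup>2) \<le> (norm x)\<^sup>2"
proof -
  define s where "s = (\<Sum>i\<in>I. (e i \<bullet> x) *\<^sub>R e i)"
  have ss: "s \<bullet> s = (\<Sum>i\<in>I. (e i \<bullet> x)\<^sup>2)"
    unfolding s_def using inner_sum_orthonormal[OF assms] by (simp add: power2_eq_square)
  have sx: "s \<bullet> x = (\<Sum>i\<in>I. (e i \<bullet> x)\<^sup>2)"
    unfolding s_def by (simp add: inner_sum_left power2_eq_square)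
  have "0 \<le> (x - s) \<bullet> (x - s)" by simp
  also have "\<dots> = x \<bullet> x - 2 * (s \<bullet> x) + s \<bullet> s"
    by (simp add: inner_diff_left inner_diff_right inner_commute)
  finally show ?thesis using ss sx by (simp add: power2_norm_eq_inner)
qed

lemma norm_in_span_orthonormal:
  assumes "orthonormal_upto e r" "I \<subseteq> {..<r}" "x \<in> span (e ` I)"
  shows "(norm x)\<^sup>2 = (\<Sum>i\<in>I. (e i \<bullet> x)\<^sup>2)"
proof -
  define s where "s = (\<Sum>i\<in>I. (e i \<bullet> x) *\<^sub>R e i)"
  have "s \<in> span (e ` I)" unfolding s_def
    by (intro span_sum span_scale span_base) auto
  then have residual_in_span: "x - s \<in> span (e ` I)" using assms(3) span_diff by blast
  have "orthogonal (x - s) y" if "y \<in> e ` I" for y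
  proof -
    obtain j where j: "j \<in> I" "y = e j" using \<open>y \<in> e ` I\<close> by blast
    have "e j \<bullet> s = e j \<bullet> x" unfolding s_def using inner_orthonormal_sum[OF assms(1,2) j(1)] .
    then show ?thesis
      using j by (simp add: orthogonal_def inner_diff_left inner_diff_right inner_commute)
  qed
  then have "orthogonal (x - s) (x - s)" by (rule orthogonal_to_span[OF residual_in_span])
  then have "x = s" by (simp add: orthogonal_def)
  then show ?thesis using norm_sum_orthonormal[OF assms(1,2), of "\<lambda>i. e i \<bullet> x"] s_def by simp
qed

lemma dim_orthonormal_upto:
  assumes "orthonormal_upto (e :: nat \<Rightarrow> 'a::euclidean_space) r"
  shows "dim (e ` {..<r}) = r"
proof -
  have "inj_on e {..<r}"
    using assms unfolding orthonormal_upto_def by (intro inj_onI) (metis lessThan_iff zero_neq_one)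
  moreover have "independent (e ` {..<r})"
  proof (rule pairwise_orthogonal_independent)
    show "pairwise orthogonal (e ` {..<r})"
      using assms unfolding pairwise_def orthogonal_def orthonormal_upto_def by auto
    show "0 \<notin> e ` {..<r}"
      using orthonormal_upto_norm[OF assms] by fastforce
  qed
  ultimately show ?thesis
    by (metis card_image card_lessThan dim_span dim_span_eq_card_independent)
qed

lemma exists_unit_in_span_orthogonal:
  fixes V W :: "nat \<Rightarrow> 'a::euclidean_space"
  assumes V: "orthonormal_upto V p" and W: "orthonormal_upto W q" and "q < p"
  shows "\<exists>x. norm x = 1 \<and> x \<in> span (V ` {..<p}) \<and> (\<forall>j<q. W j \<bullet> x = 0)"
proof (rule ccontr)
  assume no_unit: "\<not> ?thesis"
  define L where "L y = (\<Sum>j<q. (W j \<bullet> y) *\<^sub>R W j)" for y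
  have lin: "linear L"
    by (rule linearI) (simp_all add: L_def inner_add_right scaleR_add_left sum.distrib scaleR_sum_right)
  have "inj_on L (span (V ` {..<p}))"
  proof (rule linear_inj_on_iff_eq_0[OF lin subspace_span, THEN iffD2], intro ballI impI)
    fix y assume y: "y \<in> span (V ` {..<p})" "L y = 0"
    have "W j \<bullet> y = 0" if "j < q" for j
      using inner_orthonormal_sum[OF W, of "{..<q}" j "\<lambda>j. W j \<bullet> y"] y(2) that
      by (simp add: L_def)
    then have "W j \<bullet> ((1 / norm y) *\<^sub>R y) = 0" if "j < q" for j
      using that by simp
    moreover have "(1 / norm y) *\<^sub>R y \<in> span (V ` {..<p})" using y(1) by (rule span_scale)
    moreover have "y \<noteq> 0 \<Longrightarrow> norm ((1 / norm y) *\<^sub>R y) = 1" by simp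
    ultimately show "y = 0" using no_unit by blast
  qed
  then have "p = dim (L ` (V ` {..<p}))"
    using dim_image_eq[OF lin] dim_orthonormal_upto[OF V] by simp
  also have "\<dots> \<le> card (W ` {..<q})"
    by (rule dim_le_card) (auto simp: L_def intro!: span_sum span_scale intro: span_base)
  also have "\<dots> \<le> q" using card_image_le[of "{..<q}" W] by simp
  finally show False using \<open>q < p\<close> by simp
qed

text \<open>Comparing each term with the threshold \<open>t = a (k - 1)\<close> gives
  \<open>a i * c i \<le> [i < k] a i + t (c i - [i < k])\<close>, and the \<open>t\<close>-terms sum to at most \<open>0\<close>.\<close>

lemma weighted_sum_le_sum_largest:
  fixes a c :: "nat \<Rightarrow> real"
  assumes dec: "\<And>i j. i \<le> j \<Longrightarrow> j < r \<Longrightarrow> a j \<le> a i"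
    and a_nonneg: "\<And>i. i < r \<Longrightarrow> 0 \<le> a i"
    and c_bounds: "\<And>i. i < r \<Longrightarrow> 0 \<le> c i \<and> c i \<le> 1"
    and c_sum: "(\<Sum>i<r. c i) \<le> real k"
  shows "(\<Sum>i<r. a i * c i) \<le> (\<Sum>i<min k r. a i)"
proof -
  define t where "t = (if k < r then a (k - 1) else 0)"
  define top :: "nat \<Rightarrow> real" where "top i = (if i < k then 1 else 0)" for i
  have term_le: "a i * c i \<le> top i * a i + t * (c i - top i)" if "i < r" for i
  proof (cases "k < r"; cases "i < k")
    assume "k < r" "i < k"
    then have "t \<le> a i" unfolding t_def using dec by simp
    then have "0 \<le> (a i - t) * (1 - c i)" using c_bounds \<open>i < r\<close> by simp
    then show ?thesis using \<open>i < k\<close> by (simp add: top_def algebra_simps)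
  next
    assume "k < r" "\<not> i < k"
    then have "a i \<le> t" unfolding t_def using dec \<open>i < r\<close> by simp
    then show ?thesis using \<open>\<not> i < k\<close> c_bounds \<open>i < r\<close> by (simp add: top_def mult_right_mono)
  qed (use \<open>i < r\<close> a_nonneg c_bounds in \<open>auto simp: t_def top_def mult_left_le\<close>)
  have top_sum: "(\<Sum>i<r. top i * f i) = (\<Sum>i<min k r. f i)" for f :: "nat \<Rightarrow> real"
  proof -
    have "(\<Sum>i<r. top i * f i) = (\<Sum>i<r. if i < k then f i else 0)"
      by (intro sum.cong) (auto simp: top_def)
    also have "\<dots> = sum f ({..<r} \<inter> {i. i < k})" by (simp add: sum.inter_restrict)
    also have "{..<r} \<inter> {i. i < k} = {..<min k r}" by auto
    finally show ?thesis .
  qed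
  have "t * ((\<Sum>i<r. c i) - real (min k r)) \<le> 0"
    using c_sum a_nonneg by (cases "k < r") (auto simp: t_def mult_nonneg_nonpos)
  moreover have "(\<Sum>i<r. a i * c i) \<le> (\<Sum>i<r. top i * a i + t * (c i - top i))"
    using term_le by (intro sum_mono) simp
  moreover have "(\<Sum>i<r. top i * a i + t * (c i - top i))
      = (\<Sum>i<min k r. a i) + t * ((\<Sum>i<r. c i) - real (min k r))"
    using top_sum[of a] top_sum[of "\<lambda>_. 1"]
    by (simp add: sum.distrib sum_subtractf sum_distrib_left right_diff_distrib)
      (simp flip: sum_distrib_left)
  ultimately show ?thesis by linarith
qed

lemma svd_expansionD:
  assumes "svd_expansion M r \<sigma> u v"
  shows "orthonormal_upto u r" "orthonormal_upto v r"
    "orthonormal_upto (\<lambda>i. outer_prod (u i) (v i)) r"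
    "\<And>i. i < r \<Longrightarrow> 0 < \<sigma> i" "\<And>i j. i \<le> j \<Longrightarrow> j < r \<Longrightarrow> \<sigma> j \<le> \<sigma> i"
    "M = (\<Sum>i<r. \<sigma> i *\<^sub>R outer_prod (u i) (v i))"
  using assms unfolding svd_expansion_def orthonormal_upto_def by (auto simp: inner_outer_prod)

lemma vector_mult_svd:
  assumes "svd_expansion M r \<sigma> u v" "l < r"
  shows "u l v* M = \<sigma> l *\<^sub>R v l"
proof -
  note svd = svd_expansionD[OF assms(1)]
  have "u l v* M = (\<Sum>i<r. (\<sigma> i * (u l \<bullet> u i)) *\<^sub>R v i)"
    by (subst svd(6)) (rule vector_mult_outer_prod_sum)
  also have "\<dots> = (\<Sum>i<r. if l = i then \<sigma> i *\<^sub>R v i else 0)"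
    using svd(1) assms(2) unfolding orthonormal_upto_def by (intro sum.cong refl) auto
  finally show ?thesis using assms(2) by simp
qed

lemma norm_truncated_svd:
  assumes "svd_expansion M r \<sigma> u v" "q \<le> r"
  shows "(norm (\<Sum>i<q. \<sigma> i *\<^sub>R outer_prod (u i) (v i)))\<^sup>2 = (\<Sum>i<q. (\<sigma> i)\<^sup>2)"
  using norm_sum_orthonormal[OF svd_expansionD(3)[OF assms(1)], of "{..<q}" \<sigma>] assms(2) by auto

text \<open>\<open>left_proj w p M\<close> is \<open>W W\<^sup>T M\<close>, where \<open>W\<close> has the columns \<open>w 0, \<dots>, w (p - 1)\<close>.\<close>

definition left_proj :: "(nat \<Rightarrow> real^'m) \<Rightarrow> nat \<Rightarrow> real^'n^'m \<Rightarrow> real^'n^'m" where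
  "left_proj w p M = (\<Sum>l<p. outer_prod (w l) (w l v* M))"

lemma left_proj_add: "left_proj w p (M + N) = left_proj w p M + left_proj w p N"
  unfolding left_proj_def
  by (simp add: vector_matrix_mult_add_rdistrib outer_prod_add_right sum.distrib)

lemma inner_left_proj:
  assumes "orthonormal_upto w p"
  shows "left_proj w p M \<bullet> left_proj w p M = (\<Sum>l<p. (w l v* M) \<bullet> (w l v* M))"
    and "left_proj w p M \<bullet> M = (\<Sum>l<p. (w l v* M) \<bullet> (w l v* M))"
proof -
  have "left_proj w p M \<bullet> left_proj w p M
      = (\<Sum>l<p. \<Sum>m<p. (w l \<bullet> w m) * ((w l v* M) \<bullet> (w m v* M)))"
    unfolding left_proj_def
    by (simp add: inner_sum_left inner_sum_right inner_outer_prod) (rule sum.swap)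
  also have "\<dots> = (\<Sum>l<p. \<Sum>m<p. if l = m then (w l v* M) \<bullet> (w m v* M) else 0)"
    using assms unfolding orthonormal_upto_def by (intro sum.cong refl) auto
  finally show "left_proj w p M \<bullet> left_proj w p M = (\<Sum>l<p. (w l v* M) \<bullet> (w l v* M))"
    by simp
  show "left_proj w p M \<bullet> M = (\<Sum>l<p. (w l v* M) \<bullet> (w l v* M))"
    unfolding left_proj_def by (simp add: inner_sum_left inner_outer_prod_left)
qed

lemma norm_left_proj:
  "orthonormal_upto w p \<Longrightarrow> (norm (left_proj w p M))\<^sup>2 = (\<Sum>l<p. (norm (w l v* M))\<^sup>2)"
  using inner_left_proj(1) by (simp add: power2_norm_eq_inner)

lemma left_proj_pythagoras:
  assumes "orthonormal_upto w p"
  shows "(norm M)\<^sup>2 = (norm (left_proj w p M))\<^sup>2 + (norm (M - left_proj w p M))\<^sup>2"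
proof -
  have "(norm (M - left_proj w p M))\<^sup>2
      = M \<bullet> M - 2 * (left_proj w p M \<bullet> M) + left_proj w p M \<bullet> left_proj w p M"
    by (simp add: power2_norm_eq_inner inner_diff_left inner_diff_right inner_commute)
  then show ?thesis using inner_left_proj[OF assms, of M] by (simp add: power2_norm_eq_inner)
qed

lemma left_proj_svd:
  assumes "svd_expansion M r \<sigma> u v" "p \<le> r"
  shows "left_proj u p M = (\<Sum>i<p. \<sigma> i *\<^sub>R outer_prod (u i) (v i))"
  unfolding left_proj_def using assms
  by (intro sum.cong refl) (simp add: vector_mult_svd outer_prod_scaleR_right)

lemma best_rank_approx_left_proj:
  assumes "best_rank_approx k M Mk"
  obtains w p where "p \<le> k" "orthonormal_upto w p" "Mk = left_proj w p M"
proof -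
  obtain r \<sigma> u v where svd: "svd_expansion M r \<sigma> u v"
    and Mk: "Mk = (\<Sum>i<min k r. \<sigma> i *\<^sub>R outer_prod (u i) (v i))"
    using assms unfolding best_rank_approx_def by blast
  show ?thesis
  proof
    show "orthonormal_upto u (min k r)"
      using orthonormal_upto_mono[OF svd_expansionD(1)[OF svd]] by simp
    show "Mk = left_proj u (min k r) M" unfolding Mk by (rule left_proj_svd[OF svd, symmetric]) simp
  qed simp
qed

lemma sum_sq_inner_orthonormal_le:
  assumes "orthonormal_upto u r" "orthonormal_upto w p"
  shows "(\<Sum>l<p. \<Sum>i<r. (u i \<bullet> w l)\<^sup>2) \<le> real p"
proof -
  have "(\<Sum>l<p. \<Sum>i<r. (u i \<bullet> w l)\<^sup>2) \<le> (\<Sum>l<p. (norm (w l))\<^sup>2)"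
    by (intro sum_mono bessel_inequality[OF assms(1)]) simp
  also have "\<dots> = real p" using orthonormal_upto_norm[OF assms(2)] by simp
  finally show ?thesis .
qed

text \<open>Ky Fan's maximum principle: \<open>\<parallel>W W\<^sup>T M\<parallel>\<^sub>F\<^sup>2 = \<Sum>\<^sub>i \<sigma>\<^sub>i\<^sup>2 c\<^sub>i\<close> with weights
  \<open>c\<^sub>i = \<Sum>\<^sub>l (w\<^sub>l \<bullet> u\<^sub>i)\<^sup>2 \<in> [0, 1]\<close> of total mass at most \<open>p \<le> k\<close>.\<close>

lemma norm_left_proj_le_top_singular_values:
  assumes svd: "svd_expansion M r \<sigma> u v" and w: "orthonormal_upto w p" and "p \<le> k"
  shows "(norm (left_proj w p M))\<^sup>2 \<le> (\<Sum>i<min k r. (\<sigma> i)\<^sup>2)"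
proof -
  note svd = svd_expansionD[OF svd]
  define c where "c i = (\<Sum>l<p. (w l \<bullet> u i)\<^sup>2)" for i
  have "(norm (w l v* M))\<^sup>2 = (\<Sum>i<r. (\<sigma> i)\<^sup>2 * (w l \<bullet> u i)\<^sup>2)" for l
    using norm_sum_orthonormal[OF svd(2), of "{..<r}"]
    by (subst svd(6)) (simp add: vector_mult_outer_prod_sum power_mult_distrib)
  then have "(norm (left_proj w p M))\<^sup>2 = (\<Sum>i<r. (\<sigma> i)\<^sup>2 * c i)"
    unfolding norm_left_proj[OF w] c_def sum_distrib_left by (subst sum.swap) simp
  also have "\<dots> \<le> (\<Sum>i<min k r. (\<sigma> i)\<^sup>2)"
  proof (rule weighted_sum_le_sum_largest)
    show "(\<sigma> j)\<^sup>2 \<le> (\<sigma> i)\<^sup>2" if "i \<le> j" "j < r" for i j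
      using svd(4)[of j] svd(5)[OF that] that(2) by (intro power_mono) auto
    show "0 \<le> c i \<and> c i \<le> 1" if "i < r" for i
      using bessel_inequality[OF w, of "{..<p}" "u i"] orthonormal_upto_norm[OF svd(1) that]
      by (auto simp: c_def inner_commute intro: sum_nonneg)
    have "(\<Sum>i<r. c i) = (\<Sum>l<p. \<Sum>i<r. (u i \<bullet> w l)\<^sup>2)"
      unfolding c_def by (subst sum.swap) (simp add: inner_commute)
    also have "\<dots> \<le> real k"
      using sum_sq_inner_orthonormal_le[OF svd(1) w] \<open>p \<le> k\<close> by linarith
    finally show "(\<Sum>i<r. c i) \<le> real k" .
  qed simp
  finally show ?thesis .
qed

lemma norm_left_proj_le_best_rank_approx:
  assumes "best_rank_approx k M Mk" "orthonormal_upto w p" "p \<le> k"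
  shows "norm (left_proj w p M) \<le> norm Mk"
proof -
  obtain r \<sigma> u v where svd: "svd_expansion M r \<sigma> u v"
    and Mk: "Mk = (\<Sum>i<min k r. \<sigma> i *\<^sub>R outer_prod (u i) (v i))"
    using assms(1) unfolding best_rank_approx_def by blast
  have "(norm (left_proj w p M))\<^sup>2 \<le> (norm Mk)\<^sup>2"
    unfolding Mk norm_truncated_svd[OF svd min.cobounded2]
    by (rule norm_left_proj_le_top_singular_values[OF svd assms(2,3)])
  then show ?thesis by (rule power2_le_imp_le) simp
qed

lemma pythagoras_perturbation_bound:
  fixes a b n x y :: real
  assumes "0 \<le> a" "0 \<le> b" "0 \<le> n"
    and pyth: "x\<^sup>2 + y\<^sup>2 = b\<^sup>2 + a\<^sup>2" and "b - 2 * n \<le> x"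
  shows "y \<le> a + 2 * sqrt (n * b)"
proof -
  have "y\<^sup>2 \<le> a\<^sup>2 + 4 * (n * b)"
  proof (cases "b \<le> 2 * n")
    case True
    then have "b * b \<le> (2 * n) * b" using \<open>0 \<le> b\<close> by (rule mult_right_mono)
    then have "b\<^sup>2 \<le> 4 * (n * b)"
      using mult_nonneg_nonneg[OF \<open>0 \<le> n\<close> \<open>0 \<le> b\<close>] by (simp add: power2_eq_square)
    then show ?thesis using pyth zero_le_power2[of x] by linarith
  next
    case False
    then have "(b - 2 * n)\<^sup>2 \<le> x\<^sup>2" using \<open>b - 2 * n \<le> x\<close> by (intro power_mono) auto
    moreover have "(b - 2 * n)\<^sup>2 = b\<^sup>2 - 4 * (n * b) + 4 * n\<^sup>2"
      by (simp add: power2_eq_square algebra_simps)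
    ultimately show ?thesis using pyth zero_le_power2[of n] by linarith
  qed
  also have "\<dots> \<le> (a + 2 * sqrt (n * b))\<^sup>2"
  proof -
    have "(sqrt (n * b))\<^sup>2 = n * b" using assms by simp
    moreover have "0 \<le> a * sqrt (n * b)" using assms by simp
    moreover have "(a + 2 * sqrt (n * b))\<^sup>2 = a\<^sup>2 + 4 * (a * sqrt (n * b)) + 4 * (sqrt (n * b))\<^sup>2"
      by (simp add: power2_eq_square algebra_simps)
    ultimately show ?thesis by linarith
  qed
  finally show ?thesis
    by (rule power2_le_imp_le) (simp add: \<open>0 \<le> a\<close> \<open>0 \<le> b\<close> \<open>0 \<le> n\<close>)
qed

lemma frob_norm_sub_best_rank_approx_perturbed:
  fixes A N Ak Nk Ahatk :: "real^'n^'m"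
  assumes Ak: "best_rank_approx k A Ak" and Nk: "best_rank_approx k N Nk"
    and Ahatk: "best_rank_approx k (A + N) Ahatk"
  shows "frob_norm (A - Ahatk) \<le> frob_norm (A - Ak) + frob_norm Nk
           + 2 * sqrt (frob_norm Nk * frob_norm Ak)"
proof -
  obtain w p where "p \<le> k" and w: "orthonormal_upto w p"
    and Ahatk_eq: "Ahatk = left_proj w p (A + N)"
    using best_rank_approx_left_proj[OF Ahatk] .
  obtain w' p' where "p' \<le> k" and w': "orthonormal_upto w' p'"
    and Ak_eq: "Ak = left_proj w' p' A"
    using best_rank_approx_left_proj[OF Ak] .
  let ?P = "left_proj w p" and ?Q = "left_proj w' p'"
  have PN: "norm (?P N) \<le> norm Nk" and QN: "norm (?Q N) \<le> norm Nk"
    using norm_left_proj_le_best_rank_approx[OF Nk] w w' \<open>p \<le> k\<close> \<open>p' \<le> k\<close> by auto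
  have "norm (?Q (A + N)) \<le> norm Ahatk"
    using norm_left_proj_le_best_rank_approx[OF Ahatk w' \<open>p' \<le> k\<close>] .
  then have "norm Ak - 2 * norm Nk \<le> norm (?P A)"
    using PN QN norm_triangle_ineq[of "?P A" "?P N"] norm_triangle_ineq4[of "?Q (A + N)" "?Q N"]
    unfolding Ahatk_eq Ak_eq left_proj_add by simp
  then have "norm (A - ?P A) \<le> norm (A - Ak) + 2 * sqrt (norm Nk * norm Ak)"
    using left_proj_pythagoras[OF w, of A] left_proj_pythagoras[OF w', of A]
    by (intro pythagoras_perturbation_bound) (simp_all add: Ak_eq)
  moreover have "A - Ahatk = (A - ?P A) - ?P N" by (simp add: Ahatk_eq left_proj_add)
  then have "norm (A - Ahatk) \<le> norm (A - ?P A) + norm (?P N)"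
    by (metis norm_triangle_ineq4)
  ultimately show ?thesis
    using PN unfolding frob_norm_eq_norm by linarith
qed

lemma norm_mult_vector_le_spec_norm: "norm ((M::real^'n^'m) *v x) \<le> spec_norm M * norm x"
  unfolding spec_norm_def by (rule onorm) simp

lemma spec_norm_nonneg: "0 \<le> spec_norm (M::real^'n^'m)"
  unfolding spec_norm_def by (rule onorm_pos_le) simp

lemma spec_norm_le:
  "(\<And>x. norm ((M::real^'n^'m) *v x) \<le> b * norm x) \<Longrightarrow> spec_norm M \<le> b"
  unfolding spec_norm_def by (rule onorm_le)

lemma spec_norm_zero: "spec_norm (0::real^'n^'m) = 0"
proof -
  have "(*v) (0::real^'n^'m) = (\<lambda>x. 0)" by (simp add: fun_eq_iff)
  then show ?thesis by (simp add: spec_norm_def onorm_zero)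
qed

lemma spec_norm_add: "spec_norm ((M::real^'n^'m) + N) \<le> spec_norm M + spec_norm N"
  unfolding spec_norm_def matrix_vector_mult_add_rdistrib by (rule onorm_triangle) simp_all

lemma spec_norm_diff: "spec_norm ((M::real^'n^'m) - N) \<le> spec_norm M + spec_norm N"
proof (rule spec_norm_le)
  fix x
  have "norm ((M - N) *v x) \<le> norm (M *v x) + norm (N *v x)"
    by (simp add: matrix_vector_mult_diff_rdistrib norm_triangle_ineq4)
  also have "\<dots> \<le> (spec_norm M + spec_norm N) * norm x"
    using norm_mult_vector_le_spec_norm[of M x] norm_mult_vector_le_spec_norm[of N x]
    by (simp add: distrib_right)
  finally show "norm ((M - N) *v x) \<le> (spec_norm M + spec_norm N) * norm x" .
qed

lemma spec_norm_orthonormal_sum_le: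
  assumes u: "orthonormal_upto u r" and v: "orthonormal_upto v r" and I: "I \<subseteq> {..<r}"
    and "0 \<le> s" and bound: "\<And>i. i \<in> I \<Longrightarrow> \<bar>\<sigma> i\<bar> \<le> s"
  shows "spec_norm (\<Sum>i\<in>I. \<sigma> i *\<^sub>R outer_prod (u i :: real^'m) (v i :: real^'n)) \<le> s"
proof (rule spec_norm_le)
  fix x
  have "(norm ((\<Sum>i\<in>I. \<sigma> i *\<^sub>R outer_prod (u i) (v i)) *v x))\<^sup>2
      = (\<Sum>i\<in>I. (\<sigma> i)\<^sup>2 * (v i \<bullet> x)\<^sup>2)"
    unfolding outer_prod_sum_mult_vector norm_sum_orthonormal[OF u I] by (simp add: power_mult_distrib)
  also have "\<dots> \<le> (\<Sum>i\<in>I. s\<^sup>2 * (v i \<bullet> x)\<^sup>2)"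
    using bound \<open>0 \<le> s\<close> by (intro sum_mono mult_right_mono) (simp_all add: power2_le_iff_abs_le)
  also have "\<dots> \<le> s\<^sup>2 * (norm x)\<^sup>2"
    unfolding sum_distrib_left[symmetric] by (intro mult_left_mono bessel_inequality[OF v I]) simp
  also have "\<dots> = (s * norm x)\<^sup>2" by (simp add: power_mult_distrib)
  finally show "norm ((\<Sum>i\<in>I. \<sigma> i *\<^sub>R outer_prod (u i) (v i)) *v x) \<le> s * norm x"
    by (rule power2_le_imp_le) (simp add: \<open>0 \<le> s\<close>)
qed

lemma truncated_svd_mult_vector:
  assumes "svd_expansion M r \<sigma> u v" "l < q" "q \<le> r"
  shows "(\<Sum>i<q. \<sigma> i *\<^sub>R outer_prod (u i) (v i)) *v v l = \<sigma> l *\<^sub>R u l"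
proof -
  have "(\<Sum>i<q. \<sigma> i *\<^sub>R outer_prod (u i) (v i)) *v v l
      = (\<Sum>i<q. if l = i then \<sigma> i *\<^sub>R u i else 0)"
    unfolding outer_prod_sum_mult_vector using svd_expansionD(2)[OF assms(1)] assms(2,3)
    unfolding orthonormal_upto_def by (intro sum.cong refl) auto
  then show ?thesis using assms(2) by simp
qed

lemma spec_norm_le_spec_norm_best_rank_approx:
  assumes "0 < k" "best_rank_approx k M Mk"
  shows "spec_norm M \<le> spec_norm Mk"
proof -
  obtain r \<sigma> u v where svd: "svd_expansion M r \<sigma> u v"
    and Mk: "Mk = (\<Sum>i<min k r. \<sigma> i *\<^sub>R outer_prod (u i) (v i))"
    using assms(2) unfolding best_rank_approx_def by blast
  note svd' = svd_expansionD[OF svd]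
  show ?thesis
  proof (cases "r = 0")
    case True
    then show ?thesis using svd'(6) by (simp add: spec_norm_zero spec_norm_nonneg)
  next
    case False
    have "spec_norm M \<le> \<sigma> 0"
      unfolding svd'(6) using False svd'(4,5)
      by (intro spec_norm_orthonormal_sum_le[OF svd'(1,2)]) (auto simp: less_imp_le)
    also have "\<sigma> 0 = norm (Mk *v v 0)"
      using truncated_svd_mult_vector[OF svd, of 0 "min k r"] False assms(1) svd'(4)[of 0]
        orthonormal_upto_norm[OF svd'(1), of 0]
      by (simp add: Mk)
    also have "\<dots> \<le> spec_norm Mk"
      using norm_mult_vector_le_spec_norm[of Mk "v 0"] orthonormal_upto_norm[OF svd'(2), of 0] False
      by simp
    finally show ?thesis .
  qed
qed

lemma spec_norm_svd_tail_le:
  assumes "svd_expansion M r \<sigma> u v" "k < r"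
  shows "spec_norm (M - (\<Sum>i<k. \<sigma> i *\<^sub>R outer_prod (u i) (v i))) \<le> \<sigma> k"
proof -
  note svd = svd_expansionD[OF assms(1)]
  have "M = (\<Sum>i<k. \<sigma> i *\<^sub>R outer_prod (u i) (v i))
      + (\<Sum>i\<in>{k..<r}. \<sigma> i *\<^sub>R outer_prod (u i) (v i))"
    using svd(6) sum.atLeastLessThan_concat[of 0 k r "\<lambda>i. \<sigma> i *\<^sub>R outer_prod (u i) (v i)"] assms(2)
    by (simp add: atLeast0LessThan)
  then have "M - (\<Sum>i<k. \<sigma> i *\<^sub>R outer_prod (u i) (v i))
      = (\<Sum>i\<in>{k..<r}. \<sigma> i *\<^sub>R outer_prod (u i) (v i))"
    by simp
  also have "spec_norm \<dots> \<le> \<sigma> k"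
    using svd(4,5) assms(2) by (intro spec_norm_orthonormal_sum_le[OF svd(1,2)]) (auto simp: less_imp_le)
  finally show ?thesis .
qed

text \<open>The witness is a unit vector \<open>z\<close> in the span of the top \<open>k + 1\<close> right singular vectors
  that is annihilated by the rank-\<open>p\<close> matrix; then \<open>\<sigma> k \<le> \<parallel>M z\<parallel>\<close>.\<close>

lemma singular_value_le_spec_norm_diff:
  assumes svd: "svd_expansion M r \<sigma> u v" and "k < r"
    and w: "orthonormal_upto w p" and "p \<le> k"
  shows "\<sigma> k \<le> spec_norm (M - (\<Sum>i<p. c i *\<^sub>R outer_prod (x i) (w i)))"
proof -
  note svd = svd_expansionD[OF svd]
  have v: "orthonormal_upto v (Suc k)" using orthonormal_upto_mono[OF svd(2)] \<open>k < r\<close> by simp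
  obtain z where z: "norm z = 1" "z \<in> span (v ` {..<Suc k})" and z_orth: "\<forall>j<p. w j \<bullet> z = 0"
    using exists_unit_in_span_orthogonal[OF v w] \<open>p \<le> k\<close> by auto
  have rank_part_z: "(\<Sum>i<p. c i *\<^sub>R outer_prod (x i) (w i)) *v z = 0"
    using z_orth by (auto simp: outer_prod_sum_mult_vector intro!: sum.neutral)
  have "(\<sigma> k)\<^sup>2 = (\<Sum>i<Suc k. (\<sigma> k)\<^sup>2 * (v i \<bullet> z)\<^sup>2)"
    using norm_in_span_orthonormal[OF v subset_refl z(2)] z(1) by (simp flip: sum_distrib_left)
  also have "\<dots> \<le> (\<Sum>i<Suc k. (\<sigma> i * (v i \<bullet> z))\<^sup>2)"
    using svd(4)[of k] svd(5) \<open>k < r\<close>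
    by (intro sum_mono) (simp add: power_mult_distrib mult_right_mono power_mono)
  also have "\<dots> \<le> (\<Sum>i<r. (\<sigma> i * (v i \<bullet> z))\<^sup>2)"
    using \<open>k < r\<close> by (intro sum_mono2) auto
  also have "\<dots> = (norm (M *v z))\<^sup>2"
  proof -
    have "M *v z = (\<Sum>i<r. (\<sigma> i * (v i \<bullet> z)) *\<^sub>R u i)"
      by (subst svd(6)) (rule outer_prod_sum_mult_vector)
    then show ?thesis by (simp only: norm_sum_orthonormal[OF svd(1) subset_refl])
  qed
  finally have "\<sigma> k \<le> norm (M *v z)" by (rule power2_le_imp_le) simp
  also have "M *v z = (M - (\<Sum>i<p. c i *\<^sub>R outer_prod (x i) (w i))) *v z"
    using rank_part_z by (simp add: matrix_vector_mult_diff_rdistrib)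
  also have "norm \<dots> \<le> spec_norm (M - (\<Sum>i<p. c i *\<^sub>R outer_prod (x i) (w i)))"
    using norm_mult_vector_le_spec_norm[of _ z] z(1) by simp
  finally show ?thesis .
qed

text \<open>Eckart--Young in the spectral norm; every matrix of rank at most \<open>k\<close> has the form of the
  subtracted sum.\<close>

lemma spec_norm_sub_best_rank_approx_le:
  assumes "best_rank_approx k M Mk" "orthonormal_upto w p" "p \<le> k"
  shows "spec_norm (M - Mk) \<le> spec_norm (M - (\<Sum>i<p. c i *\<^sub>R outer_prod (x i) (w i)))"
proof -
  obtain r \<sigma> u v where svd: "svd_expansion M r \<sigma> u v"
    and Mk: "Mk = (\<Sum>i<min k r. \<sigma> i *\<^sub>R outer_prod (u i) (v i))"
    using assms(1) unfolding best_rank_approx_def by blast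
  show ?thesis
  proof (cases "k < r")
    case True
    then have "min k r = k" by simp
    then show ?thesis
      using order_trans[OF spec_norm_svd_tail_le[OF svd True]
          singular_value_le_spec_norm_diff[OF svd True assms(2,3)]]
      by (simp add: Mk)
  next
    case False
    then have "M - Mk = 0" using svd_expansionD(6)[OF svd] by (simp add: Mk)
    then show ?thesis by (simp add: spec_norm_zero spec_norm_nonneg)
  qed
qed

lemma spec_norm_sub_best_rank_approx_perturbed:
  fixes A N Ak Nk Ahatk :: "real^'n^'m"
  assumes "0 < k" and Ak: "best_rank_approx k A Ak" and Nk: "best_rank_approx k N Nk"
    and Ahatk: "best_rank_approx k (A + N) Ahatk"
  shows "spec_norm (A - Ahatk) \<le> spec_norm (A - Ak) + 2 * spec_norm Nk"
proof -
  obtain r \<sigma> u v where svd: "svd_expansion A r \<sigma> u v"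
    and Ak_eq: "Ak = (\<Sum>i<min k r. \<sigma> i *\<^sub>R outer_prod (u i) (v i))"
    using Ak unfolding best_rank_approx_def by blast
  have "spec_norm (A - Ahatk) \<le> spec_norm (A + N - Ahatk) + spec_norm N"
    using spec_norm_diff[of "A + N - Ahatk" N] by simp
  also have "spec_norm (A + N - Ahatk) \<le> spec_norm (A + N - Ak)"
    unfolding Ak_eq using orthonormal_upto_mono[OF svd_expansionD(2)[OF svd]]
    by (intro spec_norm_sub_best_rank_approx_le[OF Ahatk]) auto
  also have "A + N - Ak = (A - Ak) + N" by simp
  also have "spec_norm \<dots> + spec_norm N \<le> spec_norm (A - Ak) + 2 * spec_norm N"
    using spec_norm_add[of "A - Ak" N] by simp
  also have "\<dots> \<le> spec_norm (A - Ak) + 2 * spec_norm Nk"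
    using spec_norm_le_spec_norm_best_rank_approx[OF \<open>0 < k\<close> Nk] by simp
  finally show ?thesis by simp
qed

theorem mainTheorem18:
  fixes A N Ak Nk Ahatk :: "real^'n^'m" and k :: nat
  assumes "0 < k"
    and "best_rank_approx k A Ak"
    and "best_rank_approx k N Nk"
    and "best_rank_approx k (A + N) Ahatk"
  shows "spec_norm (A - Ahatk) \<le> spec_norm (A - Ak) + 2 * spec_norm Nk
         \<and> frob_norm (A - Ahatk) \<le> frob_norm (A - Ak) + frob_norm Nk
           + 2 * sqrt (frob_norm Nk * frob_norm Ak)"
  using spec_norm_sub_best_rank_approx_perturbed[OF assms]
    frob_norm_sub_best_rank_approx_perturbed[OF assms(2-4)] by blast

end
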